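(* Let $\bar A\in\mathbb{R}^{n\times n}$ be Hurwitz, $\bar Q=\bar Q^T\succeq0$, and consider $\dot{\mathbf{x}}=\bar A\mathbf{x}$, $\mathbf{x}(t_0)=\mathbf{x}_0$, with cost $J=\int_{t_0}^\infty\mathbf{x}^T\bar Q\mathbf{x}\,dt$. For $Y\in\mathbb{R}^{n\times n}$ (Krotov function $q=\mathbf{x}^TY\mathbf{x}$) define $J_{eq}(Y)=\mathbf{x}_0^TY\mathbf{x}_0+\int_{t_0}^\infty\mathbf{x}(t)^T(\bar A^TY+Y\bar A+\bar Q)\mathbf{x}(t)\,dt$, where $\mathbf{x}(t)$ is the solution of the system. Let $Y^*$ be the solution of $\bar A^TY+Y\bar A+\bar Q=0$ and $J^*=\mathbf{x}_0^TY^*\mathbf{x}_0$. Then (1) for every symmetric $Y\succeq0$, $J_{eq}(Y)\ge J^*$; (2) if $t_0=0$, then $J_{eq}(Y)=J^*$ for every matrix $Y$.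
   Context: $J_{eq}(Y)$ is the Krotov-equivalent form of the cost for $q(\mathbf{x})=\mathbf{x}^TY\mathbf{x}$: $q(\mathbf{x}_0)+\int s\,dt$ with $s=\frac{\partial q}{\partial\mathbf{x}}\bar A\mathbf{x}+\mathbf{x}^T\bar Q\mathbf{x}$ (the terminal term vanishes since $\mathbf{x}(t)\to0$). *)

theory Defs
  imports "HOL-Analysis.Analysis"
begin

definition hurwitz :: "real^'n^'n \<Rightarrow> bool" where
  "hurwitz A \<longleftrightarrow>
     (\<forall>(l::complex) (v::complex^'n). v \<noteq> 0 \<and>
        (\<chi> i. \<Sum>j\<in>UNIV. complex_of_real (A$i$j) * v$j) = (\<chi> i. l * v$i) \<longrightarrow> Re l < 0)"

definition psd :: "real^'n^'n \<Rightarrow> bool" where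
  "psd M \<longleftrightarrow> transpose M = M \<and> (\<forall>v. 0 \<le> v \<bullet> (M *v v))"

definition quad :: "real^'n^'n \<Rightarrow> real^'n \<Rightarrow> real" where
  "quad M v = v \<bullet> (M *v v)"

definition Jeq :: "real^'n^'n \<Rightarrow> real^'n^'n \<Rightarrow> real \<Rightarrow> real^'n \<Rightarrow> (real \<Rightarrow> real^'n) \<Rightarrow> real^'n^'n \<Rightarrow> real" where
  "Jeq A Q t0 x0 x Y = quad Y x0 +
     integral {t0..} (\<lambda>t. quad (transpose A ** Y + Y ** A + Q) (x t))"

end

theory Submission
  imports Defs "Jordan_Normal_Form.Schur_Decomposition"
begin

(* Along a trajectory of x' = A x, the derivative of x^T M x is x^T (A^T M + M A) x.  For M = Y
   this is the integrand of J_eq(Y) minus x^T Q x, and for M = Y* the Lyapunov equation makes it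
   -x^T Q x; so the integrand of J_eq(Y) is the derivative of x^T Y x - x^T Y* x.  As A is Hurwitz,
   x(t) -> 0 and the integral telescopes: J_eq(Y) = x0^T Y* x0 for every Y and every t0, which gives
   both claims.

   Decay: Schur's theorem triangularises A over the complex numbers.  The triangular system is
   solved from the last coordinate upwards, each coordinate obeying z' = c z + g with Re c < 0
   and g -> 0; for such an equation |z|^2 eventually stays below any level e^2, because above
   that level its derivative is at most Re c * e^2 < 0. *)

no_notation Matrix.scalar_prod (infix \<open>\<bullet>\<close> 70)

section \<open>Quadratic forms along linear flows\<close>

lemma has_integral_Ici_of_tendsto:
  fixes f :: "real \<Rightarrow> 'a::banach"
  assumes fin: "\<And>b. b \<ge> a \<Longrightarrow> (f has_integral F b) {a..b}"
    and lim: "(F \<longlongrightarrow> l) at_top"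
  shows "(f has_integral l) {a..}"
proof -
  have unbounded: "\<not> (\<exists>c d. {a..} = cbox c d)"
  proof clarify
    fix c d :: real assume "{a..} = cbox c d"
    moreover have "max a d + 1 \<in> {a..} - cbox c d" by auto
    ultimately show False by blast
  qed
  show ?thesis
  proof (subst has_integral_alt, simp only: unbounded if_False, intro allI impI)
    fix e :: real assume "e > 0"
    with lim obtain B where B: "\<And>b. b \<ge> B \<Longrightarrow> dist (F b) l < e"
      unfolding tendsto_iff eventually_at_top_linorder by blast
    have "\<exists>z. ((\<lambda>x. if x \<in> {a..} then f x else 0) has_integral z) (cbox c d) \<and> norm (z - l) < e"
      if box: "ball 0 (\<bar>a\<bar> + \<bar>B\<bar> + 1) \<subseteq> cbox c d" for c d
    proof (intro exI conjI)
      have "- (\<bar>a\<bar> + \<bar>B\<bar> + 1/2) \<in> cbox c d" "\<bar>a\<bar> + \<bar>B\<bar> + 1/2 \<in> cbox c d"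
        using box by (auto simp: subset_iff)
      then have "c \<le> a" "a \<le> d" "B \<le> d"
        by (auto simp: cbox_interval)
      have "((\<lambda>x. if x \<in> {a..d} then f x else 0) has_integral F d) {c..d}"
        using has_integral_restrict_closed_subinterval[OF fin[OF \<open>a \<le> d\<close>, folded cbox_interval], of c d]
          \<open>c \<le> a\<close> by (simp add: cbox_interval)
      then show "((\<lambda>x. if x \<in> {a..} then f x else 0) has_integral F d) (cbox c d)"
        unfolding cbox_interval by (rule has_integral_eq[rotated]) simp
      show "norm (F d - l) < e" using B[OF \<open>B \<le> d\<close>] by (simp add: dist_norm)
    qed
    then show "\<exists>B>0. \<forall>c d. ball 0 B \<subseteq> cbox c d \<longrightarrow>
        (\<exists>z. ((\<lambda>x. if x \<in> {a..} then f x else 0) has_integral z) (cbox c d) \<and> norm (z - l) < e)"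
      by (intro exI[of _ "\<bar>a\<bar> + \<bar>B\<bar> + 1"]) auto
  qed
qed

lemma has_integral_Ici_of_has_real_derivative:
  fixes f f' :: "real \<Rightarrow> real"
  assumes der: "\<And>t. t \<ge> a \<Longrightarrow> (f has_real_derivative f' t) (at t within {a..})"
    and lim: "(f \<longlongrightarrow> L) at_top"
  shows "(f' has_integral (L - f a)) {a..}"
proof (rule has_integral_Ici_of_tendsto[where F = "\<lambda>b. f b - f a"])
  fix b assume "a \<le> b"
  then show "(f' has_integral (f b - f a)) {a..b}"
    using der by (intro fundamental_theorem_of_calculus)
      (auto simp: has_real_derivative_iff_has_vector_derivative[symmetric]
            intro!: DERIV_subset[OF der])
next
  show "((\<lambda>b. f b - f a) \<longlongrightarrow> L - f a) at_top"
    by (intro tendsto_diff lim tendsto_const)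
qed

lemma quad_add: "quad (M + N) v = quad M v + quad N v"
  by (simp add: quad_def matrix_vector_mult_add_rdistrib inner_add_right)

lemma quad_transpose_mult_add:
  fixes A M :: "real^'n^'n"
  shows "(A *v v) \<bullet> (M *v v) + v \<bullet> (M *v (A *v v)) = quad (transpose A ** M + M ** A) v"
proof -
  have "(A *v v) \<bullet> (M *v v) = v \<bullet> (transpose A *v (M *v v))"
    by (metis adjoint_clauses(1) adjoint_matrix matrix_vector_mul_linear)
  then show ?thesis
    unfolding quad_add by (simp add: quad_def matrix_vector_mul_assoc)
qed

lemma has_real_derivative_quad_linear_flow:
  fixes A M :: "real^'n^'n"
  assumes "(x has_vector_derivative A *v x t) (at t within S)"
  shows "((\<lambda>t. quad M (x t)) has_real_derivative quad (transpose A ** M + M ** A) (x t))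
           (at t within S)"
proof -
  have dx: "(x has_derivative (\<lambda>h. h *\<^sub>R (A *v x t))) (at t within S)"
    using assms by (simp add: has_vector_derivative_def)
  have "((\<lambda>t. quad M (x t)) has_derivative
          (\<lambda>h. x t \<bullet> (M *v (h *\<^sub>R (A *v x t))) + (h *\<^sub>R (A *v x t)) \<bullet> (M *v x t))) (at t within S)"
    unfolding quad_def
    by (intro has_derivative_inner dx bounded_linear.has_derivative[OF matrix_vector_mul_bounded_linear])
  then show ?thesis
    unfolding has_field_derivative_def quad_transpose_mult_add[symmetric]
    by (rule has_derivative_eq_rhs) (simp add: fun_eq_iff algebra_simps)
qed

lemma has_integral_quad_linear_flow:
  fixes A M :: "real^'n^'n"
  assumes sol: "\<And>t. t \<ge> t0 \<Longrightarrow> (x has_vector_derivative A *v x t) (at t within {t0..})"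
    and decay: "(x \<longlongrightarrow> 0) at_top"
  shows "((\<lambda>t. quad (transpose A ** M + M ** A) (x t)) has_integral - quad M (x t0)) {t0..}"
proof -
  have "((\<lambda>t. quad M (x t)) has_real_derivative quad (transpose A ** M + M ** A) (x t))
          (at t within {t0..})" if "t \<ge> t0" for t
    using sol[OF that] by (rule has_real_derivative_quad_linear_flow)
  moreover have "((\<lambda>t. quad M (x t)) \<longlongrightarrow> quad M 0) at_top"
    unfolding quad_def
    by (intro tendsto_inner decay bounded_linear.tendsto[OF matrix_vector_mul_bounded_linear])
  ultimately show ?thesis
    using has_integral_Ici_of_has_real_derivative by (fastforce simp: quad_def)
qed

lemma Jeq_eq_quad_of_lyapunov:
  fixes A Q Ystar :: "real^'n^'n"
  assumes sol: "\<And>t. t \<ge> t0 \<Longrightarrow> (x has_vector_derivative A *v x t) (at t within {t0..})"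
    and decay: "(x \<longlongrightarrow> 0) at_top" and "x t0 = x0"
    and lyap: "transpose A ** Ystar + Ystar ** A + Q = 0"
  shows "Jeq A Q t0 x0 x Y = quad Ystar x0"
proof -
  have Q_eq: "quad Q v = - quad (transpose A ** Ystar + Ystar ** A) v" for v
    using quad_add[of "transpose A ** Ystar + Ystar ** A" Q v] by (simp add: lyap quad_def)
  have "((\<lambda>t. quad (transpose A ** Y + Y ** A + Q) (x t)) has_integral quad Ystar x0 - quad Y x0) {t0..}"
    using has_integral_diff[OF has_integral_quad_linear_flow[OF sol decay, of Y]
        has_integral_quad_linear_flow[OF sol decay, of Ystar]]
    by (simp add: quad_add Q_eq \<open>x t0 = x0\<close> algebra_simps)
  then show ?thesis
    by (simp add: Jeq_def integral_unique)
qed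

section \<open>Decay of triangular linear systems\<close>

lemma sublevel_invariant_of_deriv_neg:
  fixes h h' :: "real \<Rightarrow> real"
  assumes der: "\<And>t. t \<ge> s \<Longrightarrow> (h has_real_derivative h' t) (at t)"
    and neg: "\<And>t. t \<ge> s \<Longrightarrow> h t > \<delta> \<Longrightarrow> h' t < 0"
    and start: "h s \<le> \<delta>" and "s \<le> t"
  shows "h t \<le> \<delta>"
proof -
  have "continuous_on {s..t} h"
    using der by (intro continuous_at_imp_continuous_on ballI DERIV_isCont) auto
  then obtain m where m: "m \<in> {s..t}" and max: "\<And>u. u \<in> {s..t} \<Longrightarrow> h u \<le> h m"
    using continuous_attains_sup[of "{s..t}" h] \<open>s \<le> t\<close> by auto
  have "h m \<le> \<delta>"
  proof (rule ccontr)
    assume above: "\<not> h m \<le> \<delta>"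
    with start have "s < m" using m by (cases "s = m") auto
    obtain d where "d > 0" and left: "\<And>e. 0 < e \<Longrightarrow> e < d \<Longrightarrow> h m < h (m - e)"
      using DERIV_neg_dec_left[OF der neg] m above by force
    define e where "e = min (d / 2) (m - s)"
    have "0 < e" "e < d" "m - e \<in> {s..t}" using \<open>d > 0\<close> \<open>s < m\<close> m by (auto simp: e_def)
    with left max show False by fastforce
  qed
  with max[of t] \<open>s \<le> t\<close> show ?thesis by auto
qed

lemma eventually_le_of_deriv_le_neg:
  fixes h h' :: "real \<Rightarrow> real"
  assumes der: "\<And>t. t \<ge> T \<Longrightarrow> (h has_real_derivative h' t) (at t)"
    and dec: "\<And>t. t \<ge> T \<Longrightarrow> h t \<ge> \<delta> \<Longrightarrow> h' t \<le> -d" and "d > 0"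
  shows "eventually (\<lambda>t. h t \<le> \<delta>) at_top"
proof -
  have "\<exists>s\<ge>T. h s \<le> \<delta>"
  proof (rule ccontr)
    assume "\<not> ?thesis"
    then have above: "h u > \<delta>" if "u \<ge> T" for u
      using that by force
    define t where "t = T + (h T - \<delta>) / d"
    have "T < t" using above[of T] \<open>d > 0\<close> by (simp add: t_def)
    then obtain \<xi> where \<xi>: "T < \<xi>" "\<xi> < t" "h t - h T = (t - T) * h' \<xi>"
      using MVT2[of T t h h'] der by auto
    have "(t - T) * h' \<xi> \<le> (t - T) * (-d)"
      using dec[of \<xi>] above[of \<xi>] \<xi> \<open>T < t\<close> by (intro mult_left_mono) auto
    also have "\<dots> = \<delta> - h T" using \<open>d > 0\<close> by (simp add: t_def field_simps)
    finally have "h t \<le> \<delta>" using \<xi>(3) by linarith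
    with above[of t] \<open>T < t\<close> show False by auto
  qed
  then obtain s where s: "s \<ge> T" "h s \<le> \<delta>" by blast
  have neg: "h' t < 0" if "t \<ge> s" "h t > \<delta>" for t
    using dec[of t] s(1) that \<open>d > 0\<close> by force
  have "h t \<le> \<delta>" if "t \<ge> s" for t
    using der s(1) by (intro sublevel_invariant_of_deriv_neg[of s h h', OF _ neg s(2) that]) auto
  then show ?thesis unfolding eventually_at_top_linorder by blast
qed

lemma scalar_ode_tendsto_zero:
  fixes z g :: "real \<Rightarrow> complex"
  assumes der: "\<And>t. t > a \<Longrightarrow> (z has_vector_derivative (c * z t + g t)) (at t)"
    and "Re c < 0" and g: "(g \<longlongrightarrow> 0) at_top"
  shows "(z \<longlongrightarrow> 0) at_top"
proof (rule tendstoI)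
  fix e :: real assume "e > 0"
  define \<epsilon> where "\<epsilon> = e / 2"
  define r where "r = - Re c * \<epsilon> / 2"
  have "\<epsilon> > 0" "r > 0" using \<open>e > 0\<close> \<open>Re c < 0\<close> by (simp_all add: \<epsilon>_def r_def mult_neg_pos)
  then obtain T0 where T0: "\<And>t. t \<ge> T0 \<Longrightarrow> norm (g t) < r"
    using tendstoD[OF g \<open>r > 0\<close>] by (auto simp: eventually_at_top_linorder)
  define T where "T = max T0 (a + 1)"
  define h where "h t = z t \<bullet> z t" for t
  define h' where "h' t = 2 * (z t \<bullet> (c * z t + g t))" for t
  have "(h has_real_derivative h' t) (at t)" if "t \<ge> T" for t
  proof -
    have "(z has_derivative (\<lambda>k. k *\<^sub>R (c * z t + g t))) (at t)"
      using der[of t] that by (simp add: T_def has_vector_derivative_def)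
    from has_derivative_inner[OF this this] show ?thesis
      unfolding has_field_derivative_def h_def h'_def
      by (rule has_derivative_eq_rhs) (auto simp: inner_commute[of "z t"] algebra_simps)
  qed
  moreover have "h' t \<le> Re c * \<epsilon>\<^sup>2" if "t \<ge> T" and "h t \<ge> \<epsilon>\<^sup>2" for t
  proof -
    define w where "w = norm (z t)"
    have "\<epsilon> \<le> w"
      using that(2) \<open>\<epsilon> > 0\<close> by (simp add: h_def w_def dot_square_norm abs_le_square_iff)
    have "z t \<bullet> (c * z t) = Re c * w\<^sup>2"
      unfolding w_def cmod_power2 by (simp add: inner_complex_def algebra_simps power2_eq_square)
    moreover have "z t \<bullet> g t \<le> w * r"
      using norm_cauchy_schwarz[of "z t" "g t"] T0[of t] \<open>t \<ge> T\<close>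
        mult_left_mono[of "norm (g t)" r w]
      by (auto simp: w_def T_def)
    ultimately have "h' t \<le> 2 * (Re c * w\<^sup>2 + w * r)"
      by (simp add: h'_def inner_add_right)
    also have "\<dots> \<le> Re c * w\<^sup>2"
      using \<open>\<epsilon> \<le> w\<close> \<open>Re c < 0\<close> \<open>\<epsilon> > 0\<close>
      by (simp add: r_def power2_eq_square)
    also have "\<dots> \<le> Re c * \<epsilon>\<^sup>2"
      using \<open>\<epsilon> \<le> w\<close> \<open>\<epsilon> > 0\<close> \<open>Re c < 0\<close> by (simp add: power_mono)
    finally show ?thesis .
  qed
  ultimately have "eventually (\<lambda>t. h t \<le> \<epsilon>\<^sup>2) at_top"
    using \<open>\<epsilon> > 0\<close> \<open>Re c < 0\<close>
    by (intro eventually_le_of_deriv_le_neg[where d = "- Re c * \<epsilon>\<^sup>2"]) (auto simp: mult_neg_pos)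
  then show "eventually (\<lambda>t. dist (z t) 0 < e) at_top"
    by (rule eventually_mono)
      (use \<open>\<epsilon> > 0\<close> in \<open>auto simp: h_def dot_square_norm \<epsilon>_def power2_le_iff_abs_le\<close>)
qed

context includes no vec_syntax
begin

lemma index_mult_mat_vec_sum:
  assumes "M \<in> carrier_mat m n" "v \<in> carrier_vec n" "i < m"
  shows "(M *\<^sub>v v) $ i = (\<Sum>j\<in>{0..<n}. M $$ (i, j) * v $ j)"
  using assms by (auto simp: scalar_prod_def intro!: sum.cong)

lemma mult_mat_vec_has_vector_derivative:
  fixes M :: "'a::real_normed_field mat" and X :: "real \<Rightarrow> 'a Matrix.vec"
  assumes M: "M \<in> carrier_mat m n" and X: "\<And>s. X s \<in> carrier_vec n" and X': "X' \<in> carrier_vec n"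
    and der: "\<And>j. j < n \<Longrightarrow> ((\<lambda>s. X s $ j) has_vector_derivative X' $ j) F"
    and "i < m"
  shows "((\<lambda>s. (M *\<^sub>v X s) $ i) has_vector_derivative (M *\<^sub>v X') $ i) F"
proof -
  have "((\<lambda>s. \<Sum>j\<in>{0..<n}. M $$ (i, j) * X s $ j) has_vector_derivative
          (\<Sum>j\<in>{0..<n}. M $$ (i, j) * X' $ j)) F"
    by (intro has_vector_derivative_sum has_vector_derivative_mult_right der) simp
  then show ?thesis
    using index_mult_mat_vec_sum[OF M _ \<open>i < m\<close>] X X' by simp
qed

lemma mult_mat_vec_tendsto_zero:
  fixes M :: "'a::real_normed_field mat" and X :: "'b \<Rightarrow> 'a Matrix.vec"
  assumes M: "M \<in> carrier_mat m n" and X: "\<And>s. X s \<in> carrier_vec n"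
    and lim: "\<And>j. j < n \<Longrightarrow> ((\<lambda>s. X s $ j) \<longlongrightarrow> 0) F"
    and "i < m"
  shows "((\<lambda>s. (M *\<^sub>v X s) $ i) \<longlongrightarrow> 0) F"
proof -
  have "((\<lambda>s. \<Sum>j\<in>{0..<n}. M $$ (i, j) * X s $ j) \<longlongrightarrow> 0) F"
    by (intro tendsto_null_sum tendsto_mult_right_zero lim) simp
  then show ?thesis
    using index_mult_mat_vec_sum[OF M X \<open>i < m\<close>] by simp
qed

lemma upper_triangular_mult_mat_vec_index:
  fixes B :: "'a::comm_semiring_0 mat"
  assumes B: "B \<in> carrier_mat n n" "upper_triangular B" and v: "v \<in> carrier_vec n" and "k < n"
  shows "(B *\<^sub>v v) $ k = B $$ (k, k) * v $ k + (\<Sum>m\<in>{k<..<n}. B $$ (k, m) * v $ m)"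
proof -
  let ?f = "\<lambda>j. B $$ (k, j) * v $ j"
  have "(\<Sum>j\<in>{0..<k}. ?f j) = 0"
    using B \<open>k < n\<close> by (auto simp: upper_triangular_def)
  then have "(\<Sum>j\<in>{0..<n}. ?f j) = (\<Sum>j\<in>{k..<n}. ?f j)"
    using sum.atLeastLessThan_concat[of 0 k n ?f] \<open>k < n\<close> by simp
  also have "\<dots> = ?f k + (\<Sum>j\<in>{k<..<n}. ?f j)"
    using \<open>k < n\<close> by (simp add: sum.atLeast_Suc_lessThan atLeastSucLessThan_greaterThanLessThan)
  finally show ?thesis
    using index_mult_mat_vec_sum[OF B(1) v \<open>k < n\<close>] by simp
qed

lemma upper_triangular_ode_tendsto_zero:
  fixes B :: "complex mat" and z :: "real \<Rightarrow> complex Matrix.vec"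
  assumes B: "B \<in> carrier_mat n n" "upper_triangular B"
    and diag: "\<And>k. k < n \<Longrightarrow> Re (B $$ (k, k)) < 0"
    and z: "\<And>t. z t \<in> carrier_vec n"
    and der: "\<And>k t. k < n \<Longrightarrow> t > a \<Longrightarrow> ((\<lambda>s. z s $ k) has_vector_derivative (B *\<^sub>v z t) $ k) (at t)"
    and "k < n"
  shows "((\<lambda>t. z t $ k) \<longlongrightarrow> 0) at_top"
  using \<open>k < n\<close>
proof (induction "n - k" arbitrary: k rule: less_induct)
  case less
  let ?g = "\<lambda>t. \<Sum>m\<in>{k<..<n}. B $$ (k, m) * z t $ m"
  have "(?g \<longlongrightarrow> 0) at_top"
    using less by (intro tendsto_null_sum tendsto_mult_right_zero) auto
  moreover have "((\<lambda>s. z s $ k) has_vector_derivative B $$ (k, k) * z t $ k + ?g t) (at t)"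
    if "t > a" for t
    using der[OF less.prems that] unfolding upper_triangular_mult_mat_vec_index[OF B z less.prems] .
  ultimately show ?case
    using scalar_ode_tendsto_zero[of a "\<lambda>s. z s $ k" "B $$ (k, k)" ?g] diag[OF less.prems] by blast
qed

lemma similar_upper_triangular_diag_eigenvalue:
  fixes C B :: "'a::field mat"
  assumes C: "C \<in> carrier_mat n n" and B: "B \<in> carrier_mat n n" "upper_triangular B"
    and "similar_mat C B" and "k < n"
  shows "eigenvalue C (B $$ (k, k))"
proof -
  have "B $$ (k, k) \<in> set (diag_mat B)"
    using B \<open>k < n\<close> by (auto simp: diag_mat_def)
  then have "poly (char_poly B) (B $$ (k, k)) = 0"
    by (auto simp: char_poly_upper_triangular[OF B] poly_prod_list)
  then show ?thesis
    by (simp add: eigenvalue_root_char_poly[OF C] char_poly_similar[OF \<open>similar_mat C B\<close>])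
qed

lemma linear_ode_tendsto_zero:
  fixes C :: "complex mat" and X :: "real \<Rightarrow> complex Matrix.vec"
  assumes C: "C \<in> carrier_mat n n" and ev: "\<And>c. eigenvalue C c \<Longrightarrow> Re c < 0"
    and X: "\<And>t. X t \<in> carrier_vec n"
    and der: "\<And>j t. j < n \<Longrightarrow> t > a \<Longrightarrow> ((\<lambda>s. X s $ j) has_vector_derivative (C *\<^sub>v X t) $ j) (at t)"
    and "j < n"
  shows "((\<lambda>t. X t $ j) \<longlongrightarrow> 0) at_top"
proof -
  obtain es where "char_poly C = (\<Prod>c\<leftarrow>es. [:- c, 1:])"
    using char_poly_factorized[OF C] by blast
  from schur_upper_triangular[OF C this]
  obtain B where B: "B \<in> carrier_mat n n" "upper_triangular B" and "similar_mat C B"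
    by blast
  from \<open>similar_mat C B\<close> obtain P Q where "similar_mat_wit C B P Q"
    unfolding similar_mat_def by blast
  from similar_mat_witD2[OF C this]
  have PQ: "P \<in> carrier_mat n n" "Q \<in> carrier_mat n n"
    and "P * Q = 1\<^sub>m n" "Q * P = 1\<^sub>m n" and "C = P * B * Q"
    by auto
  have BQ: "B * Q \<in> carrier_mat n n"
    using B(1) PQ(2) by (rule mult_carrier_mat)
  have "Q * C = Q * (P * (B * Q))"
    by (simp add: \<open>C = P * B * Q\<close> assoc_mult_mat[OF PQ(1) B(1) PQ(2)])
  also have "\<dots> = (Q * P) * (B * Q)"
    by (rule assoc_mult_mat[OF PQ(2) PQ(1) BQ, symmetric])
  also have "\<dots> = B * Q"
    unfolding \<open>Q * P = 1\<^sub>m n\<close> by (rule left_mult_one_mat[OF BQ])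
  finally have QC: "Q * C = B * Q" .
  define z where "z t = Q *\<^sub>v X t" for t
  have z: "z t \<in> carrier_vec n" for t
    using PQ X by (simp add: z_def)
  have z_der: "((\<lambda>s. z s $ k) has_vector_derivative (B *\<^sub>v z t) $ k) (at t)"
    if "k < n" "t > a" for k t
  proof -
    have "Q *\<^sub>v (C *\<^sub>v X t) = B *\<^sub>v z t"
      using QC PQ B(1) C X by (simp add: z_def flip: assoc_mult_mat_vec)
    with mult_mat_vec_has_vector_derivative[OF PQ(2) X _ der[OF _ \<open>t > a\<close>] \<open>k < n\<close>] C X
    show ?thesis by (simp add: z_def)
  qed
  have "Re (B $$ (k, k)) < 0" if "k < n" for k
    using ev similar_upper_triangular_diag_eigenvalue[OF C B \<open>similar_mat C B\<close> that] .
  then have "((\<lambda>t. z t $ k) \<longlongrightarrow> 0) at_top" if "k < n" for k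
    using upper_triangular_ode_tendsto_zero[OF B _ z z_der that] by blast
  moreover have "X t = P *\<^sub>v z t" for t
    using PQ X \<open>P * Q = 1\<^sub>m n\<close> by (simp add: z_def flip: assoc_mult_mat_vec)
  ultimately show ?thesis
    using mult_mat_vec_tendsto_zero[where X = z, OF PQ(1) z _ \<open>j < n\<close>] by simp
qed

end

section \<open>Hurwitz matrices\<close>

(* JNF matrices, for which Schur's theorem is available, are indexed by nat; index_of_nat is an
   arbitrary enumeration of the finite index type of a Cartesian matrix. *)

definition index_of_nat :: "nat \<Rightarrow> 'n::finite" where
  "index_of_nat = (SOME \<phi>. bij_betw \<phi> {0..<CARD('n)} UNIV)"

lemma bij_betw_index_of_nat: "bij_betw (index_of_nat :: nat \<Rightarrow> 'n::finite) {0..<CARD('n)} UNIV"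
  unfolding index_of_nat_def
  by (rule someI_ex[of "\<lambda>\<phi>. bij_betw \<phi> {0..<CARD('n)} UNIV"]) (simp add: ex_bij_betw_nat_finite)

context
begin

no_notation Matrix.vec_index (infixl \<open>$\<close> 100)

definition vec_of_hma :: "'a^'n \<Rightarrow> 'a Matrix.vec" where
  "vec_of_hma v = Matrix.vec CARD('n) (\<lambda>i. v $ index_of_nat i)"

definition mat_of_hma :: "'a^'n^'n \<Rightarrow> 'a mat" where
  "mat_of_hma A = Matrix.mat CARD('n) CARD('n) (\<lambda>(i, j). A $ index_of_nat i $ index_of_nat j)"

lemma vec_of_hma_carrier [simp]: "vec_of_hma (v :: 'a^'n) \<in> carrier_vec CARD('n)"
  by (simp add: vec_of_hma_def)

lemma mat_of_hma_carrier [simp]: "mat_of_hma (A :: 'a^'n^'n) \<in> carrier_mat CARD('n) CARD('n)"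
  by (simp add: mat_of_hma_def)

lemma vec_of_hma_surj:
  assumes "u \<in> carrier_vec CARD('n)"
  shows "\<exists>v :: 'a^'n. vec_of_hma v = u"
proof
  have "inv_into {0..<CARD('n)} index_of_nat (index_of_nat j :: 'n) = j" if "j < CARD('n)" for j
    using bij_betw_imp_inj_on[OF bij_betw_index_of_nat[where 'n = 'n]] that by simp
  with assms show "vec_of_hma (\<chi> i. vec_index u (inv_into {0..<CARD('n)} index_of_nat i) :: 'a^'n) = u"
    by (auto simp: vec_of_hma_def)
qed

lemma vec_of_hma_inject [simp]:
  fixes v w :: "'a^'n"
  shows "vec_of_hma v = vec_of_hma w \<longleftrightarrow> v = w"
proof
  assume eq: "vec_of_hma v = vec_of_hma w"
  show "v = w"
  proof (rule Finite_Cartesian_Product.vec_eq_iff[THEN iffD2], rule allI)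
    fix i :: 'n
    obtain j where "j < CARD('n)" "i = index_of_nat j"
      using bij_betw_imp_surj_on[OF bij_betw_index_of_nat[where 'n = 'n]] by (metis UNIV_I atLeastLessThan_iff imageE)
    then show "v $ i = w $ i"
      using arg_cong[OF eq, of "\<lambda>u. vec_index u j"] by (simp add: vec_of_hma_def)
  qed
qed simp

lemma vec_of_hma_zero [simp]: "vec_of_hma (0 :: 'a::zero^'n) = 0\<^sub>v CARD('n)"
  by (auto simp: vec_of_hma_def)

lemma vec_of_hma_smult: "vec_of_hma (c *s v) = c \<cdot>\<^sub>v vec_of_hma v"
  by (auto simp: vec_of_hma_def)

lemma mat_of_hma_mult_vec:
  fixes A :: "'a::semiring_1^'n^'n"
  shows "mat_of_hma A *\<^sub>v vec_of_hma v = vec_of_hma (A *v v)"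
proof (rule eq_vecI)
  fix i assume "i < dim_vec (vec_of_hma (A *v v))"
  then have "i < CARD('n)" by (simp add: vec_of_hma_def)
  then show "vec_index (mat_of_hma A *\<^sub>v vec_of_hma v) i = vec_index (vec_of_hma (A *v v)) i"
    using sum.reindex_bij_betw[OF bij_betw_index_of_nat, of "\<lambda>k. A $ index_of_nat i $ k * v $ k"]
    by (simp add: mat_of_hma_def vec_of_hma_def matrix_vector_mult_def scalar_prod_def)
qed (simp add: mat_of_hma_def vec_of_hma_def)

end

lemma map_matrix_of_real_mult_vec:
  fixes A :: "real^'n^'m"
  shows "map_matrix complex_of_real A *v (\<chi> j. complex_of_real (v $ j))
           = (\<chi> i. complex_of_real ((A *v v) $ i))"
  by (simp add: matrix_vector_mult_def Finite_Cartesian_Product.vec_eq_iff)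

lemma hurwitz_imp_eigenvalue_Re_neg:
  fixes A :: "real^'n^'n"
  assumes "hurwitz A" and "eigenvalue (mat_of_hma (map_matrix complex_of_real A)) c"
  shows "Re c < 0"
proof -
  obtain u where u: "u \<in> carrier_vec CARD('n)" "u \<noteq> 0\<^sub>v CARD('n)"
    and eigen: "mat_of_hma (map_matrix complex_of_real A) *\<^sub>v u = c \<cdot>\<^sub>v u"
    using assms(2) unfolding eigenvalue_def eigenvector_def by (auto simp: mat_of_hma_def)
  obtain w :: "complex^'n" where w: "vec_of_hma w = u"
    using vec_of_hma_surj[OF u(1)] by blast
  have "w \<noteq> 0"
    using u(2) w by auto
  moreover have "map_matrix complex_of_real A *v w = c *s w"
  proof -
    have "vec_of_hma (map_matrix complex_of_real A *v w) = c \<cdot>\<^sub>v u"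
      by (simp add: eigen w flip: mat_of_hma_mult_vec)
    then show ?thesis
      by (metis vec_of_hma_inject vec_of_hma_smult w)
  qed
  ultimately show ?thesis
    using assms(1) unfolding hurwitz_def
    by (auto simp: matrix_vector_mult_def vector_scalar_mult_def)
qed

lemma hurwitz_imp_tendsto_zero:
  fixes A :: "real^'n^'n" and x :: "real \<Rightarrow> real^'n"
  assumes "hurwitz A"
    and sol: "\<And>t. t \<ge> t0 \<Longrightarrow> (x has_vector_derivative A *v x t) (at t within {t0..})"
  shows "(x \<longlongrightarrow> 0) at_top"
proof -
  let ?C = "mat_of_hma (map_matrix complex_of_real A)"
  define X where "X t = vec_of_hma (\<chi> i. complex_of_real (x t $ i))" for t
  have X_carrier: "X t \<in> carrier_vec CARD('n)" for t
    unfolding X_def by (rule vec_of_hma_carrier)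
  have X_index: "vec_index (X t) j = complex_of_real (x t $ index_of_nat j)"
    if "j < CARD('n)" for t j
    using that by (simp add: X_def vec_of_hma_def)
  have X_der: "((\<lambda>s. vec_index (X s) j) has_vector_derivative vec_index (?C *\<^sub>v X t) j) (at t)"
    if "j < CARD('n)" "t > t0" for j t
  proof -
    have "(x has_vector_derivative A *v x t) (at t within {t0<..})"
      using sol[of t] that(2) by (auto intro: has_vector_derivative_within_subset)
    then have "(x has_vector_derivative A *v x t) (at t)"
      using has_vector_derivative_within_open[of t "{t0<..}"] that(2) by auto
    then have "((\<lambda>s. x s $ index_of_nat j) has_real_derivative (A *v x t) $ index_of_nat j) (at t)"
      unfolding has_real_derivative_iff_has_vector_derivative
      by (rule bounded_linear.has_vector_derivative[OF bounded_linear_vec_nth])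
    moreover have "?C *\<^sub>v X t = vec_of_hma (\<chi> i. complex_of_real ((A *v x t) $ i))"
      by (simp add: X_def mat_of_hma_mult_vec map_matrix_of_real_mult_vec)
    ultimately show ?thesis
      using that(1) by (simp add: X_index vec_of_hma_def has_vector_derivative_of_real)
  qed
  have X_lim: "((\<lambda>t. vec_index (X t) j) \<longlongrightarrow> 0) at_top" if "j < CARD('n)" for j
    by (rule linear_ode_tendsto_zero[where C = ?C and X = X and a = t0,
          OF mat_of_hma_carrier hurwitz_imp_eigenvalue_Re_neg[OF assms(1)] X_carrier X_der that])
  show ?thesis
  proof (rule vec_tendstoI)
    fix i :: 'n
    obtain j where "j < CARD('n)" "i = index_of_nat j"
      using bij_betw_imp_surj_on[OF bij_betw_index_of_nat[where 'n = 'n]]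
      by (metis UNIV_I atLeastLessThan_iff imageE)
    with tendsto_Re[OF X_lim]
    show "((\<lambda>t. x t $ i) \<longlongrightarrow> 0 $ i) at_top"
      by (simp add: X_index)
  qed
qed

theorem theorem4:
  fixes A Q Ystar :: "real^'n^'n" and t0 :: real and x0 :: "real^'n"
    and x :: "real \<Rightarrow> real^'n"
  assumes "hurwitz A"
    and "psd Q"
    and sol: "\<And>t. t \<ge> t0 \<Longrightarrow> (x has_vector_derivative (A *v x t)) (at t within {t0..})"
    and init: "x t0 = x0"
    and lyap: "transpose A ** Ystar + Ystar ** A + Q = 0"
  shows "(\<forall>Y. psd Y \<longrightarrow> Jeq A Q t0 x0 x Y \<ge> quad Ystar x0)
       \<and> (t0 = 0 \<longrightarrow> (\<forall>Y. Jeq A Q t0 x0 x Y = quad Ystar x0))"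
proof -
  have decay: "(x \<longlongrightarrow> 0) at_top"
    using \<open>hurwitz A\<close> sol by (rule hurwitz_imp_tendsto_zero)
  have "Jeq A Q t0 x0 x Y = quad Ystar x0" for Y
    using sol decay init lyap by (rule Jeq_eq_quad_of_lyapunov)
  then show ?thesis
    by (metis order_refl)
qed

end
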